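(* A finite nonempty semigroup $S$ has a left zero or a right zero if and only if $S$ is $K$-thin and its group completion $GS$ is trivial.
   Context: An element $z\in S$ is a left zero if $zx=z$ for all $x\in S$, and a right zero if $xz=z$ for all $x\in S$. The group completion $GS$ is the image of $S$ under the left adjoint of the forgetful functor from groups to semigroups. For a finite nonempty semigroup $S$, the minimal ideal $K(S)$ is the intersection of all nonempty two-sided ideals of $S$. A Rees matrix semigroup $\mathcal{M}(H;I,J;p)$, for sets $I,J$, a group $H$ and a function $p\colon J\times I\to H$, is the set $I\times H\times J$ with product $(i,h,j)(i',h',j')=(i,h\,p(j,i')\,h',j')$. It is known that $K(S)$ is always isomorphic to such a Rees matrix semigroup with $H$ a finite group and $p$ normalized (i.e. $p(j_0,i)=e_H$ and $p(j,i_0)=e_H$ for some fixed $i_0\in I$, $j_0\in J$ and all $i,j$). $S$ is called $K$-thin if $K(S)$ has such a normalized Rees matrix structure with $|I|=1$ or $|J|=1$; equivalently, $K(S)$ is left-simple or right-simple. *)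

theory Defs
  imports "HOL-Algebra.Group"
begin

text \<open>Semigroups are modelled by the type class semigroup_mult on a finite type
  (so the semigroup S is the whole, automatically nonempty, finite universe).\<close>

definition left_zero :: "'a::semigroup_mult \<Rightarrow> bool" where
  "left_zero z \<longleftrightarrow> (\<forall>x. z * x = z)"

definition right_zero :: "'a::semigroup_mult \<Rightarrow> bool" where
  "right_zero z \<longleftrightarrow> (\<forall>x. x * z = z)"

definition sg_ideal :: "'a::semigroup_mult set \<Rightarrow> bool" where
  "sg_ideal I \<longleftrightarrow> I \<noteq> {} \<and> (\<forall>s i. i \<in> I \<longrightarrow> s * i \<in> I \<and> i * s \<in> I)"

definition minimal_ideal :: "'a::semigroup_mult set" where
  "minimal_ideal = \<Inter> {I. sg_ideal I}"

definition left_simple :: "'a::semigroup_mult set \<Rightarrow> bool" where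
  "left_simple T \<longleftrightarrow>
     (\<forall>L. L \<noteq> {} \<and> L \<subseteq> T \<and> (\<forall>t\<in>T. \<forall>l\<in>L. t * l \<in> L) \<longrightarrow> L = T)"

definition right_simple :: "'a::semigroup_mult set \<Rightarrow> bool" where
  "right_simple T \<longleftrightarrow>
     (\<forall>R. R \<noteq> {} \<and> R \<subseteq> T \<and> (\<forall>t\<in>T. \<forall>r\<in>R. r * t \<in> R) \<longrightarrow> R = T)"

definition K_thin :: "'a::semigroup_mult itself \<Rightarrow> bool" where
  "K_thin _ \<longleftrightarrow> left_simple (minimal_ideal :: 'a set) \<or> right_simple (minimal_ideal :: 'a set)"

text \<open>Group completion GS, via the standard presentation: words in letters s and s^{-1}
  (encoded as (s,True) and (s,False)), modulo the congruence generated by free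
  cancellation and the relations [s][t] = [s*t].\<close>

inductive gs_eq :: "('a::semigroup_mult \<times> bool) list \<Rightarrow> ('a \<times> bool) list \<Rightarrow> bool" where
  gs_refl: "gs_eq u u"
| gs_sym: "gs_eq u v \<Longrightarrow> gs_eq v u"
| gs_trans: "gs_eq u v \<Longrightarrow> gs_eq v w \<Longrightarrow> gs_eq u w"
| gs_cancel: "gs_eq (u @ [(x, b), (x, \<not> b)] @ v) (u @ v)"
| gs_mult: "gs_eq (u @ [(x, True), (y, True)] @ v) (u @ [(x * y, True)] @ v)"

definition gs_rel :: "(('a::semigroup_mult \<times> bool) list \<times> ('a \<times> bool) list) set" where
  "gs_rel = {(u, v). gs_eq u v}"

definition group_completion :: "'a::semigroup_mult itself \<Rightarrow> ('a \<times> bool) list set monoid" where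
  "group_completion _ =
     \<lparr> carrier = UNIV // (gs_rel :: (('a \<times> bool) list \<times> _) set),
       mult = (\<lambda>A B. gs_rel `` {(SOME u. u \<in> A) @ (SOME v. v \<in> B)}),
       one = gs_rel `` {[]} \<rparr>"

end

theory Submission
  imports Defs "HOL-Algebra.Bij"
begin

text \<open>If z is a left zero, the left zeros form an ideal, so K(S) consists of left zeros
  and is left simple; in GS the relation [z][x] = [zx] = [z] cancels to [x] = 1.
  Conversely, if K(S) is left simple then every right translation y \<mapsto> y s permutes
  the finite set K(S), and s \<mapsto> (y \<mapsto> y s) is an anti-homomorphism into the group of
  permutations of K(S). By the universal property of GS it factors through GS, so if
  GS is trivial every right translation fixes K(S) pointwise, i.e. every element of
  K(S) is a left zero. Right zeros and right simplicity are dual.\<close>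

lemma sg_idealD:
  assumes "sg_ideal I"
  shows sg_ideal_nonempty: "I \<noteq> {}"
    and sg_ideal_mult_left: "i \<in> I \<Longrightarrow> s * i \<in> I"
    and sg_ideal_mult_right: "i \<in> I \<Longrightarrow> i * s \<in> I"
  using assms by (simp_all add: sg_ideal_def)

lemma sg_ideal_Int:
  assumes "sg_ideal I" "sg_ideal J"
  shows "sg_ideal (I \<inter> J)"
proof -
  obtain i j where "i \<in> I" "j \<in> J"
    using assms by (auto simp: sg_ideal_def)
  then have "i * j \<in> I \<inter> J"
    using assms by (simp add: sg_ideal_def)
  then show ?thesis
    using assms by (auto simp: sg_ideal_def)
qed

lemma minimal_ideal_subset: "sg_ideal I \<Longrightarrow> minimal_ideal \<subseteq> I"
  unfolding minimal_ideal_def by blast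

text \<open>In a finite semigroup an ideal of least cardinality lies inside every ideal,
  hence equals the intersection of all of them.\<close>

lemma sg_ideal_minimal_ideal: "sg_ideal (minimal_ideal :: 'a::{semigroup_mult, finite} set)"
proof -
  have "sg_ideal (UNIV :: 'a set)"
    by (simp add: sg_ideal_def)
  then obtain M :: "'a set" where M: "sg_ideal M" and least: "\<And>I :: 'a set. sg_ideal I \<Longrightarrow> card M \<le> card I"
    using ex_has_least_nat[of sg_ideal UNIV card] by blast
  have M_subset: "M \<subseteq> I" if "sg_ideal I" for I
  proof -
    have "card M \<le> card (M \<inter> I)"
      using least[OF sg_ideal_Int[OF M that]] .
    then have "M \<inter> I = M"
      using card_seteq[of M "M \<inter> I"] by simp
    then show ?thesis by blast
  qed
  have "minimal_ideal = M"
  proof (rule subset_antisym)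
    show "minimal_ideal \<subseteq> M"
      using M by (rule minimal_ideal_subset)
    show "M \<subseteq> minimal_ideal"
      unfolding minimal_ideal_def by (rule Inter_greatest) (simp add: M_subset)
  qed
  then show ?thesis using M by simp
qed

lemma sg_ideal_left_zeros:
  fixes z :: "'a::semigroup_mult"
  shows "left_zero z \<Longrightarrow> sg_ideal {y :: 'a. left_zero y}"
  unfolding sg_ideal_def left_zero_def by (auto simp: mult.assoc)

lemma sg_ideal_right_zeros:
  fixes z :: "'a::semigroup_mult"
  shows "right_zero z \<Longrightarrow> sg_ideal {y :: 'a. right_zero y}"
  unfolding sg_ideal_def right_zero_def by (auto simp: mult.assoc[symmetric])

lemma left_simple_if_left_zeros:
  assumes "\<And>t. t \<in> T \<Longrightarrow> left_zero t"
  shows "left_simple T"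
  unfolding left_simple_def
proof (intro allI impI)
  fix L assume L: "L \<noteq> {} \<and> L \<subseteq> T \<and> (\<forall>t\<in>T. \<forall>l\<in>L. t * l \<in> L)"
  then obtain l where "l \<in> L" by blast
  then have "t \<in> L" if "t \<in> T" for t
    using L assms[OF that] that unfolding left_zero_def by metis
  then show "L = T" using L by blast
qed

lemma right_simple_if_right_zeros:
  assumes "\<And>t. t \<in> T \<Longrightarrow> right_zero t"
  shows "right_simple T"
  unfolding right_simple_def
proof (intro allI impI)
  fix R assume R: "R \<noteq> {} \<and> R \<subseteq> T \<and> (\<forall>t\<in>T. \<forall>r\<in>R. r * t \<in> R)"
  then obtain r where "r \<in> R" by blast
  then have "t \<in> R" if "t \<in> T" for t
    using R assms[OF that] that unfolding right_zero_def by metis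
  then show "R = T" using R by blast
qed

lemma bij_betw_mult_right_if_left_simple:
  assumes K: "sg_ideal K" "finite K" and simple: "left_simple K"
  shows "bij_betw (\<lambda>y. y * s) K K"
proof -
  let ?Ks = "(\<lambda>y. y * s) ` K"
  have "?Ks \<subseteq> K"
    using sg_ideal_mult_right[OF K(1)] by blast
  moreover have "\<forall>t\<in>K. \<forall>l\<in>?Ks. t * l \<in> ?Ks"
  proof (intro ballI)
    fix t l assume "t \<in> K" "l \<in> ?Ks"
    obtain y where "y \<in> K" "l = y * s" using \<open>l \<in> ?Ks\<close> by blast
    then have "t * l = (t * y) * s" by (simp add: mult.assoc)
    then show "t * l \<in> ?Ks" using sg_ideal_mult_left[OF K(1) \<open>y \<in> K\<close>] by blast
  qed
  moreover have "?Ks \<noteq> {}"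
    using sg_ideal_nonempty[OF K(1)] by blast
  ultimately have "?Ks = K"
    using simple unfolding left_simple_def by simp
  then show ?thesis
    unfolding bij_betw_def using finite_surj_inj[OF \<open>finite K\<close>, of "\<lambda>y. y * s"] by simp
qed

lemma bij_betw_mult_left_if_right_simple:
  assumes K: "sg_ideal K" "finite K" and simple: "right_simple K"
  shows "bij_betw (\<lambda>y. s * y) K K"
proof -
  let ?sK = "(\<lambda>y. s * y) ` K"
  have "?sK \<subseteq> K"
    using sg_ideal_mult_left[OF K(1)] by blast
  moreover have "\<forall>t\<in>K. \<forall>r\<in>?sK. r * t \<in> ?sK"
  proof (intro ballI)
    fix t r assume "t \<in> K" "r \<in> ?sK"
    obtain y where "y \<in> K" "r = s * y" using \<open>r \<in> ?sK\<close> by blast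
    then have "r * t = s * (y * t)" by (simp add: mult.assoc)
    then show "r * t \<in> ?sK" using sg_ideal_mult_right[OF K(1) \<open>y \<in> K\<close>] by blast
  qed
  moreover have "?sK \<noteq> {}"
    using sg_ideal_nonempty[OF K(1)] by blast
  ultimately have "?sK = K"
    using simple unfolding right_simple_def by simp
  then show ?thesis
    unfolding bij_betw_def using finite_surj_inj[OF \<open>finite K\<close>, of "\<lambda>y. s * y"] by simp
qed

declare gs_eq.gs_trans [trans]

lemma gs_eq_append_cong: "gs_eq u v \<Longrightarrow> gs_eq (p @ u @ q) (p @ v @ q)"
proof (induction rule: gs_eq.induct)
  case (gs_refl u)
  show ?case by (rule gs_eq.gs_refl)
next
  case (gs_sym u v)
  from gs_sym.IH show ?case by (rule gs_eq.gs_sym)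
next
  case (gs_trans u v w)
  from gs_trans.IH show ?case by (rule gs_eq.gs_trans)
next
  case (gs_cancel u x b v)
  show ?case using gs_eq.gs_cancel[of "p @ u" x b "v @ q"] by simp
next
  case (gs_mult u x y v)
  show ?case using gs_eq.gs_mult[of "p @ u" x y "v @ q"] by simp
qed

lemma gs_eq_Nil_if_letters_trivial:
  assumes letter: "\<And>x::'a::semigroup_mult. gs_eq [(x, True)] []"
  shows "gs_eq (w :: ('a \<times> bool) list) []"
proof (induction w)
  case Nil
  show ?case by (rule gs_refl)
next
  case (Cons a w)
  obtain x b where a: "a = (x, b)" by (cases a)
  have "gs_eq [(x, b)] []"
  proof (cases b)
    case True
    then show ?thesis using letter by simp
  next
    case False
    have "gs_eq [(x, False)] ([] @ [(x, True)] @ [(x, False)])"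
      using gs_eq_append_cong[OF gs_sym[OF letter], of "[]" "[(x, False)]"] by simp
    also have "gs_eq \<dots> []"
      using gs_cancel[of "[]" x True "[]"] by simp
    finally show ?thesis using False by simp
  qed
  then have "gs_eq (a # w) w"
    using gs_eq_append_cong[of "[(x, b)]" "[]" "[]" w] a by simp
  also have "gs_eq w []"
    by (rule Cons.IH)
  finally show ?case .
qed

lemma carrier_group_completion:
  "carrier (group_completion TYPE('a::semigroup_mult)) = UNIV // (gs_rel :: (('a \<times> bool) list \<times> _) set)"
  by (simp add: group_completion_def)

lemma one_group_completion:
  "\<one>\<^bsub>group_completion TYPE('a::semigroup_mult)\<^esub> = (gs_rel :: (('a \<times> bool) list \<times> _) set) `` {[]}"
  by (simp add: group_completion_def)

lemma equiv_gs_rel: "equiv UNIV gs_rel"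
proof (rule equivI)
  show "gs_rel \<subseteq> UNIV \<times> UNIV"
    by simp
  show "refl gs_rel"
    unfolding refl_on_def gs_rel_def by (auto intro: gs_refl)
  show "sym gs_rel"
    unfolding sym_def gs_rel_def by (simp add: gs_sym)
  show "trans gs_rel"
    unfolding trans_def gs_rel_def by (metis case_prodD case_prodI mem_Collect_eq gs_trans)
qed

lemma gs_rel_class_eq_iff: "gs_rel `` {u} = gs_rel `` {v} \<longleftrightarrow> gs_eq u v"
  using eq_equiv_class_iff[OF equiv_gs_rel] unfolding gs_rel_def by blast

lemma group_completion_trivial_iff:
  "carrier (group_completion TYPE('a::semigroup_mult)) = {\<one>\<^bsub>group_completion TYPE('a)\<^esub>}
     \<longleftrightarrow> (\<forall>x::'a. gs_eq [(x, True)] [])"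
proof
  assume "carrier (group_completion TYPE('a)) = {\<one>\<^bsub>group_completion TYPE('a)\<^esub>}"
  then have trivial: "UNIV // gs_rel = {gs_rel `` {[] :: ('a \<times> bool) list}}"
    by (simp only: carrier_group_completion one_group_completion)
  show "\<forall>x::'a. gs_eq [(x, True)] []"
  proof
    fix x :: 'a
    have "gs_rel `` {[(x, True)]} \<in> UNIV // (gs_rel :: (('a \<times> bool) list \<times> _) set)"
      by (rule quotientI) simp
    then have "gs_rel `` {[(x, True)]} = gs_rel `` {[]}"
      using trivial by blast
    then show "gs_eq [(x, True)] []"
      by (simp only: gs_rel_class_eq_iff)
  qed
next
  assume letters: "\<forall>x::'a. gs_eq [(x, True)] []"
  have "gs_eq w []" for w :: "('a \<times> bool) list"
    by (rule gs_eq_Nil_if_letters_trivial) (use letters in blast)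
  then have "gs_rel `` {w} = gs_rel `` {[]}" for w :: "('a \<times> bool) list"
    by (simp only: gs_rel_class_eq_iff)
  then have "UNIV // gs_rel = {gs_rel `` {[] :: ('a \<times> bool) list}}"
    unfolding quotient_def by blast
  then show "carrier (group_completion TYPE('a)) = {\<one>\<^bsub>group_completion TYPE('a)\<^esub>}"
    by (simp only: carrier_group_completion one_group_completion)
qed

lemma gs_eq_letter_Nil_if_left_zero:
  fixes x z :: "'a::semigroup_mult"
  assumes "left_zero z"
  shows "gs_eq [(x, True)] []"
proof -
  have "gs_eq [(x, True)] [(z, False), (z, True), (x, True)]"
    using gs_cancel[of "[]" z False "[(x, True)]"] by (simp add: gs_sym)
  also have "gs_eq \<dots> [(z, False), (z * x, True)]"
    using gs_mult[of "[(z, False)]" z x "[]"] by simp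
  also have "\<dots> = [(z, False), (z, True)]"
    using assms by (simp add: left_zero_def)
  also have "gs_eq \<dots> []"
    using gs_cancel[of "[]" z False "[]"] by simp
  finally show ?thesis .
qed

lemma gs_eq_letter_Nil_if_right_zero:
  fixes x z :: "'a::semigroup_mult"
  assumes "right_zero z"
  shows "gs_eq [(x, True)] []"
proof -
  have "gs_eq [(x, True)] [(x, True), (z, True), (z, False)]"
    using gs_cancel[of "[(x, True)]" z True "[]"] by (simp add: gs_sym)
  also have "gs_eq \<dots> [(x * z, True), (z, False)]"
    using gs_mult[of "[]" x z "[(z, False)]"] by simp
  also have "\<dots> = [(z, True), (z, False)]"
    using assms by (simp add: right_zero_def)
  also have "gs_eq \<dots> []"
    using gs_cancel[of "[]" z True "[]"] by simp
  finally show ?thesis .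
qed

fun word_eval :: "('b, 'c) monoid_scheme \<Rightarrow> ('a \<Rightarrow> 'b) \<Rightarrow> ('a \<times> bool) list \<Rightarrow> 'b" where
  "word_eval G h [] = \<one>\<^bsub>G\<^esub>"
| "word_eval G h ((x, b) # w) = (if b then h x else inv\<^bsub>G\<^esub> h x) \<otimes>\<^bsub>G\<^esub> word_eval G h w"

context group
begin

lemma word_eval_closed:
  assumes "\<And>x. h x \<in> carrier G"
  shows "word_eval G h w \<in> carrier G"
  by (induction w) (auto simp: assms)

lemma word_eval_append:
  assumes "\<And>x. h x \<in> carrier G"
  shows "word_eval G h (u @ v) = word_eval G h u \<otimes> word_eval G h v"
  by (induction u) (auto simp: assms word_eval_closed m_assoc)

lemma word_eval_gs_eq:
  assumes closed: "\<And>x. h x \<in> carrier G"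
    and hom: "\<And>x y. h (x * y) = h x \<otimes> h y"
  shows "gs_eq u v \<Longrightarrow> word_eval G h u = word_eval G h v"
proof (induction rule: gs_eq.induct)
  case (gs_cancel u x b v)
  show ?case
    by (simp add: word_eval_append closed word_eval_closed m_assoc[symmetric])
      (simp add: closed word_eval_closed m_assoc)
next
  case (gs_mult u x y v)
  show ?case by (simp add: word_eval_append closed word_eval_closed hom m_assoc)
qed simp_all

lemma hom_trivial_if_group_completion_trivial:
  assumes "carrier (group_completion TYPE('s::semigroup_mult)) = {\<one>\<^bsub>group_completion TYPE('s)\<^esub>}"
    and "\<And>x. h x \<in> carrier G"
    and "\<And>x y. h (x * y) = h x \<otimes> h y"
  shows "h (s :: 's) = \<one>"
proof -
  have "gs_eq [(s, True)] []"
    using assms(1) group_completion_trivial_iff by blast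
  then have "word_eval G h [(s, True)] = word_eval G h []"
    using word_eval_gs_eq assms(2,3) by blast
  then show ?thesis using assms(2) by simp
qed

lemma antihom_trivial_if_group_completion_trivial:
  assumes "carrier (group_completion TYPE('s::semigroup_mult)) = {\<one>\<^bsub>group_completion TYPE('s)\<^esub>}"
    and closed: "\<And>x. h x \<in> carrier G"
    and antihom: "\<And>x y. h (x * y) = h y \<otimes> h x"
  shows "h (s :: 's) = \<one>"
proof -
  have "inv (h s) = \<one>"
    \<comment> \<open>inversion turns the anti-homomorphism h into a homomorphism\<close>
    using assms(1) by (rule hom_trivial_if_group_completion_trivial)
      (simp_all add: closed antihom inv_mult_group)
  then show ?thesis using closed by simp
qed

end

lemma left_translations_trivial:
  assumes trivial: "carrier (group_completion TYPE('a::semigroup_mult)) = {\<one>\<^bsub>group_completion TYPE('a)\<^esub>}"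
    and bij: "\<And>s. bij_betw (\<lambda>y. s * y) K K"
    and "k \<in> K"
  shows "s * k = (k :: 'a)"
proof -
  let ?l = "\<lambda>s. \<lambda>y\<in>K. s * y"
  have closed: "?l x \<in> carrier (BijGroup K)" for x
    using bij by (simp add: BijGroup_def Bij_def)
  have hom: "?l (x * y) = ?l x \<otimes>\<^bsub>BijGroup K\<^esub> ?l y" for x y
    using closed bij_betw_apply[OF bij] by (auto simp: BijGroup_def compose_def mult.assoc)
  have "?l s = \<one>\<^bsub>BijGroup K\<^esub>"
    using group_BijGroup trivial closed hom
    by (rule group.hom_trivial_if_group_completion_trivial[where h = ?l])
  then have "?l s k = k"
    using \<open>k \<in> K\<close> by (simp add: BijGroup_def)
  then show ?thesis
    using \<open>k \<in> K\<close> by simp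
qed

lemma right_translations_trivial:
  assumes trivial: "carrier (group_completion TYPE('a::semigroup_mult)) = {\<one>\<^bsub>group_completion TYPE('a)\<^esub>}"
    and bij: "\<And>s. bij_betw (\<lambda>y. y * s) K K"
    and "k \<in> K"
  shows "k * s = (k :: 'a)"
proof -
  let ?r = "\<lambda>s. \<lambda>y\<in>K. y * s"
  have closed: "?r x \<in> carrier (BijGroup K)" for x
    using bij by (simp add: BijGroup_def Bij_def)
  have antihom: "?r (x * y) = ?r y \<otimes>\<^bsub>BijGroup K\<^esub> ?r x" for x y
    using closed bij_betw_apply[OF bij] by (auto simp: BijGroup_def compose_def mult.assoc)
  have "?r s = \<one>\<^bsub>BijGroup K\<^esub>"
    using group_BijGroup trivial closed antihom
    by (rule group.antihom_trivial_if_group_completion_trivial[where h = ?r])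
  then have "?r s k = k"
    using \<open>k \<in> K\<close> by (simp add: BijGroup_def)
  then show ?thesis
    using \<open>k \<in> K\<close> by simp
qed

theorem proposition7p2:
  shows "(\<exists>z::'a::{semigroup_mult, finite}. left_zero z \<or> right_zero z) \<longleftrightarrow>
         (K_thin TYPE('a) \<and>
          carrier (group_completion TYPE('a)) = {\<one>\<^bsub>group_completion TYPE('a)\<^esub>})"
proof
  assume "\<exists>z::'a. left_zero z \<or> right_zero z"
  then obtain z :: 'a where "left_zero z \<or> right_zero z" by blast
  then show "K_thin TYPE('a) \<and> carrier (group_completion TYPE('a)) = {\<one>\<^bsub>group_completion TYPE('a)\<^esub>}"
  proof
    assume z: "left_zero z"
    have "left_simple (minimal_ideal :: 'a set)"
      using minimal_ideal_subset[OF sg_ideal_left_zeros[OF z]] by (intro left_simple_if_left_zeros) blast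
    then show ?thesis
      using gs_eq_letter_Nil_if_left_zero[OF z] by (simp add: K_thin_def group_completion_trivial_iff)
  next
    assume z: "right_zero z"
    have "right_simple (minimal_ideal :: 'a set)"
      using minimal_ideal_subset[OF sg_ideal_right_zeros[OF z]] by (intro right_simple_if_right_zeros) blast
    then show ?thesis
      using gs_eq_letter_Nil_if_right_zero[OF z] by (simp add: K_thin_def group_completion_trivial_iff)
  qed
next
  let ?K = "minimal_ideal :: 'a set"
  assume "K_thin TYPE('a) \<and> carrier (group_completion TYPE('a)) = {\<one>\<^bsub>group_completion TYPE('a)\<^esub>}"
  then have thin: "left_simple ?K \<or> right_simple ?K"
    and trivial: "carrier (group_completion TYPE('a)) = {\<one>\<^bsub>group_completion TYPE('a)\<^esub>}"
    unfolding K_thin_def by blast+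
  have K: "sg_ideal ?K" "finite ?K"
    by (simp_all add: sg_ideal_minimal_ideal)
  then obtain k where k: "k \<in> ?K"
    using sg_ideal_nonempty by blast
  from thin show "\<exists>z::'a. left_zero z \<or> right_zero z"
  proof
    assume "left_simple ?K"
    then have "left_zero k"
      using right_translations_trivial[OF trivial bij_betw_mult_right_if_left_simple[OF K] k]
      by (simp add: left_zero_def)
    then show ?thesis by blast
  next
    assume "right_simple ?K"
    then have "right_zero k"
      using left_translations_trivial[OF trivial bij_betw_mult_left_if_right_simple[OF K] k]
      by (simp add: right_zero_def)
    then show ?thesis by blast
  qed
qed

end
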